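(* If $\mathcal{M}=((X,\mathcal{C}_R),\mathcal{V})$ is a quasi-discrete closure model, then for all $x_1,x_2\in X$, $x_1\simeq x_2$ implies $x_1\equiv_{SLCS}x_2$.
   Context: Quasi-discrete closure model: $\mathcal{C}_R(A)=A\cup\{x\mid\exists a\in A.\ aRx\}$, $\vec{\mathcal{C}}(x)=\mathcal{C}_R(\{x\})$, $\overleftarrow{\mathcal{C}}(x)=\mathcal{C}_{R^{-1}}(\{x\})$, $\mathcal{V}:AP\to\mathcal{P}(X)$, $\mathcal{V}^{-1}(x)=\{p\mid x\in\mathcal{V}(p)\}$. A path is a function $\pi:\mathbb{N}\to X$ that is continuous from $(\mathbb{N},\mathcal{C}_{succ})$ (closure based on $n\mapsto n+1$) to $(X,\mathcal{C}_R)$, i.e. $\pi[\mathcal{C}_{succ}(N)]\subseteq\mathcal{C}_R(\pi[N])$ for all $N\subseteq\mathbb{N}$. SLCS formulas: $\Phi::=p\mid\neg\Phi\mid\Phi\lor\Phi\mid\vec\rho\,\Phi_1[\Phi_2]\mid\overleftarrow\rho\,\Phi_1[\Phi_2]$; $x\models\vec\rho\,\Phi_1[\Phi_2]$ iff there are a path $\pi$ and $\ell$ with $\pi(0)=x$, $\pi(\ell)\models\Phi_1$, $\pi(j)\models\Phi_2$ for $0<j<\ell$; $x\models\overleftarrow\rho\,\Phi_1[\Phi_2]$ iff there are a path $\pi$ and $\ell$ with $\pi(\ell)=x$, $\pi(0)\models\Phi_1$, $\pi(j)\models\Phi_2$ for $0<j<\ell$; atoms and Boolean connectives as usual. $\equiv_{SLCS}$: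 satisfying the same SLCS formulas. $\simeq$: union of all non-empty equivalence relations $B$ with $(x_1,x_2)\in B\Rightarrow\mathcal{V}^{-1}(x_1)=\mathcal{V}^{-1}(x_2)$ and for all $C\in X/B$, $\vec{\mathcal{C}}(x_1)\cap C\neq\emptyset\iff\vec{\mathcal{C}}(x_2)\cap C\neq\emptyset$ and $\overleftarrow{\mathcal{C}}(x_1)\cap C\neq\emptyset\iff\overleftarrow{\mathcal{C}}(x_2)\cap C\neq\emptyset$. *)

theory Defs
  imports Main
begin

text \<open>Quasi-discrete closure model over the carrier type 'x, given by a relation R
  and a valuation V of atomic propositions 'ap.\<close>

definition closure_R :: "('x \<times> 'x) set \<Rightarrow> 'x set \<Rightarrow> 'x set" where
  "closure_R R A = A \<union> {x. \<exists>a\<in>A. (a, x) \<in> R}"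

definition fwd_cl :: "('x \<times> 'x) set \<Rightarrow> 'x \<Rightarrow> 'x set" where
  "fwd_cl R x = closure_R R {x}"

definition bwd_cl :: "('x \<times> 'x) set \<Rightarrow> 'x \<Rightarrow> 'x set" where
  "bwd_cl R x = closure_R (R\<inverse>) {x}"

definition val_inv :: "('ap \<Rightarrow> 'x set) \<Rightarrow> 'x \<Rightarrow> 'ap set" where
  "val_inv V x = {p. x \<in> V p}"

definition succ_rel :: "(nat \<times> nat) set" where
  "succ_rel = {(n, Suc n) | n. True}"

definition is_path :: "('x \<times> 'x) set \<Rightarrow> (nat \<Rightarrow> 'x) \<Rightarrow> bool" where
  "is_path R \<pi> \<longleftrightarrow> (\<forall>N. \<pi> ` closure_R succ_rel N \<subseteq> closure_R R (\<pi> ` N))"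

datatype 'ap slcs =
    Atom 'ap
  | Neg "'ap slcs"
  | Disj "'ap slcs" "'ap slcs"
  | RhoF "'ap slcs" "'ap slcs"
  | RhoB "'ap slcs" "'ap slcs"

fun sat :: "('x \<times> 'x) set \<Rightarrow> ('ap \<Rightarrow> 'x set) \<Rightarrow> 'x \<Rightarrow> 'ap slcs \<Rightarrow> bool" where
  "sat R V x (Atom p) \<longleftrightarrow> x \<in> V p"
| "sat R V x (Neg \<Phi>) \<longleftrightarrow> \<not> sat R V x \<Phi>"
| "sat R V x (Disj \<Phi>1 \<Phi>2) \<longleftrightarrow> sat R V x \<Phi>1 \<or> sat R V x \<Phi>2"
| "sat R V x (RhoF \<Phi>1 \<Phi>2) \<longleftrightarrow>
     (\<exists>\<pi> l. is_path R \<pi> \<and> \<pi> 0 = x \<and> sat R V (\<pi> l) \<Phi>1 \<and>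
        (\<forall>j. 0 < j \<and> j < l \<longrightarrow> sat R V (\<pi> j) \<Phi>2))"
| "sat R V x (RhoB \<Phi>1 \<Phi>2) \<longleftrightarrow>
     (\<exists>\<pi> l. is_path R \<pi> \<and> \<pi> l = x \<and> sat R V (\<pi> 0) \<Phi>1 \<and>
        (\<forall>j. 0 < j \<and> j < l \<longrightarrow> sat R V (\<pi> j) \<Phi>2))"

definition slcs_equiv :: "('x \<times> 'x) set \<Rightarrow> ('ap \<Rightarrow> 'x set) \<Rightarrow> 'x \<Rightarrow> 'x \<Rightarrow> bool" where
  "slcs_equiv R V x1 x2 \<longleftrightarrow> (\<forall>\<Phi>. sat R V x1 \<Phi> \<longleftrightarrow> sat R V x2 \<Phi>)"

definition cmm_bisim :: "('x \<times> 'x) set \<Rightarrow> ('ap \<Rightarrow> 'x set) \<Rightarrow> ('x \<times> 'x) set \<Rightarrow> bool" where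
  "cmm_bisim R V B \<longleftrightarrow> B \<noteq> {} \<and> equiv UNIV B \<and>
     (\<forall>(x1, x2)\<in>B. val_inv V x1 = val_inv V x2 \<and>
        (\<forall>C\<in>UNIV // B.
           (fwd_cl R x1 \<inter> C \<noteq> {} \<longleftrightarrow> fwd_cl R x2 \<inter> C \<noteq> {}) \<and>
           (bwd_cl R x1 \<inter> C \<noteq> {} \<longleftrightarrow> bwd_cl R x2 \<inter> C \<noteq> {})))"

definition cmm_bisimilar :: "('x \<times> 'x) set \<Rightarrow> ('ap \<Rightarrow> 'x set) \<Rightarrow> ('x \<times> 'x) set" where
  "cmm_bisimilar R V = \<Union>{B. cmm_bisim R V B}"

end

theory Submission
  imports Defs
begin

text \<open>Each bisimulation B preserves satisfaction, by induction on formulas; negation needs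
  the symmetry of B. For the reachability operators a witness path is lifted along B one
  step at a time: if (a, b) \<in> B and a' lies in the closure of a, then the class of a' meets
  the closure of a, hence that of b, which yields a matching successor of b. Backward
  paths are handled as forward paths of the converse relation by reversing the relevant
  finite segment.\<close>

lemma is_path_iff_step: "is_path R \<pi> \<longleftrightarrow> (\<forall>n. \<pi> (Suc n) \<in> fwd_cl R (\<pi> n))"
proof
  assume "is_path R \<pi>"
  show "\<forall>n. \<pi> (Suc n) \<in> fwd_cl R (\<pi> n)"
  proof
    fix n
    have "Suc n \<in> closure_R succ_rel {n}"
      unfolding closure_R_def succ_rel_def by auto
    then show "\<pi> (Suc n) \<in> fwd_cl R (\<pi> n)"
      using \<open>is_path R \<pi>\<close> unfolding is_path_def fwd_cl_def by fastforce
  qed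
next
  assume step: "\<forall>n. \<pi> (Suc n) \<in> fwd_cl R (\<pi> n)"
  show "is_path R \<pi>" unfolding is_path_def
  proof (intro allI subsetI)
    fix N z
    assume "z \<in> \<pi> ` closure_R succ_rel N"
    then obtain m where m: "m \<in> closure_R succ_rel N" "z = \<pi> m" by blast
    show "z \<in> closure_R R (\<pi> ` N)"
    proof (cases "m \<in> N")
      case True
      then show ?thesis using m unfolding closure_R_def by auto
    next
      case False
      then obtain n where "n \<in> N" "m = Suc n"
        using m unfolding closure_R_def succ_rel_def by auto
      then show ?thesis
        using step m unfolding fwd_cl_def closure_R_def by auto
    qed
  qed
qed

lemma self_mem_fwd_cl: "x \<in> fwd_cl R x"
  unfolding fwd_cl_def closure_R_def by simp

lemma fwd_cl_converse: "fwd_cl (R\<inverse>) = bwd_cl R"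
  unfolding fwd_cl_def bwd_cl_def by (rule refl)

lemma mem_fwd_cl_converse_iff: "b \<in> fwd_cl (R\<inverse>) a \<longleftrightarrow> a \<in> fwd_cl R b"
  unfolding fwd_cl_def closure_R_def by auto

text \<open>Truncated subtraction: only the segment up to l is reversed, beyond l the path stays at \<pi> 0.\<close>
lemma is_path_reverse:
  assumes "is_path R \<pi>"
  shows "is_path (R\<inverse>) (\<lambda>j. \<pi> (l - j))"
  unfolding is_path_iff_step
proof
  fix n
  show "\<pi> (l - Suc n) \<in> fwd_cl (R\<inverse>) (\<pi> (l - n))"
  proof (cases "n < l")
    case True
    then have "l - n = Suc (l - Suc n)" by simp
    then show ?thesis
      using assms unfolding is_path_iff_step mem_fwd_cl_converse_iff by metis
  next
    case False
    then show ?thesis by (simp add: self_mem_fwd_cl)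
  qed
qed

lemma is_path_lift:
  assumes sim: "\<And>a b a'. (a, b) \<in> S \<Longrightarrow> a' \<in> fwd_cl R a \<Longrightarrow> \<exists>b'\<in>fwd_cl R b. (a', b') \<in> S"
    and path: "is_path R \<pi>" and start: "(\<pi> 0, y) \<in> S"
  obtains \<pi>' where "is_path R \<pi>'" "\<pi>' 0 = y" "\<And>n. (\<pi> n, \<pi>' n) \<in> S"
proof -
  define \<pi>' where
    "\<pi>' = rec_nat y (\<lambda>n z. SOME z'. z' \<in> fwd_cl R z \<and> (\<pi> (Suc n), z') \<in> S)"
  have next_step: "\<pi>' (Suc n) \<in> fwd_cl R (\<pi>' n) \<and> (\<pi> (Suc n), \<pi>' (Suc n)) \<in> S"
    if "(\<pi> n, \<pi>' n) \<in> S" for n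
  proof -
    have "\<exists>z'. z' \<in> fwd_cl R (\<pi>' n) \<and> (\<pi> (Suc n), z') \<in> S"
      using sim[OF that] path unfolding is_path_iff_step by blast
    then show ?thesis unfolding \<pi>'_def by simp (rule someI_ex)
  qed
  have related: "(\<pi> n, \<pi>' n) \<in> S" for n
  proof (induction n)
    case 0
    then show ?case using start unfolding \<pi>'_def by simp
  next
    case (Suc n)
    then show ?case using next_step by blast
  qed
  show thesis
  proof
    show "is_path R \<pi>'" unfolding is_path_iff_step using next_step related by blast
    show "\<pi>' 0 = y" unfolding \<pi>'_def by simp
    show "(\<pi> n, \<pi>' n) \<in> S" for n by (rule related)
  qed
qed

lemma equiv_class_meets_transfer:
  assumes "equiv UNIV B"
    and meets: "\<forall>C\<in>UNIV // B. A \<inter> C \<noteq> {} \<longleftrightarrow> A' \<inter> C \<noteq> {}"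
    and "a \<in> A"
  shows "\<exists>a'\<in>A'. (a, a') \<in> B"
proof -
  have "a \<in> B `` {a}" using assms(1) unfolding equiv_def refl_on_def by blast
  then have "A' \<inter> B `` {a} \<noteq> {}"
    using meets \<open>a \<in> A\<close> unfolding quotient_def by blast
  then show ?thesis by blast
qed

lemma cmm_bisim_sym: "cmm_bisim R V B \<Longrightarrow> (x, y) \<in> B \<Longrightarrow> (y, x) \<in> B"
  unfolding cmm_bisim_def equiv_def sym_def by blast

lemma cmm_bisim_fwd_step:
  assumes "cmm_bisim R V B" "(a, b) \<in> B" "a' \<in> fwd_cl R a"
  shows "\<exists>b'\<in>fwd_cl R b. (a', b') \<in> B"
  using assms equiv_class_meets_transfer unfolding cmm_bisim_def by fastforce

lemma cmm_bisim_bwd_step: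
  assumes "cmm_bisim R V B" "(a, b) \<in> B" "a' \<in> fwd_cl (R\<inverse>) a"
  shows "\<exists>b'\<in>fwd_cl (R\<inverse>) b. (a', b') \<in> B"
  using assms equiv_class_meets_transfer unfolding cmm_bisim_def fwd_cl_converse by fastforce

lemma cmm_bisim_sat:
  assumes B: "cmm_bisim R V B"
  shows "(x, y) \<in> B \<Longrightarrow> sat R V x \<Phi> \<Longrightarrow> sat R V y \<Phi>"
proof (induction \<Phi> arbitrary: x y)
  case (Atom p)
  then show ?case using B unfolding cmm_bisim_def val_inv_def by fastforce
next
  case (Neg \<Phi>)
  then show ?case using cmm_bisim_sym[OF B] by auto
next
  case (Disj \<Phi>1 \<Phi>2)
  then show ?case by auto
next
  case (RhoF \<Phi>1 \<Phi>2)
  then obtain \<pi> l where \<pi>: "is_path R \<pi>" "\<pi> 0 = x" "sat R V (\<pi> l) \<Phi>1"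
    "\<forall>j. 0 < j \<and> j < l \<longrightarrow> sat R V (\<pi> j) \<Phi>2" by auto
  have start: "(\<pi> 0, y) \<in> B" using RhoF.prems(1) \<pi>(2) by simp
  obtain \<pi>' where \<pi>': "is_path R \<pi>'" "\<pi>' 0 = y" "\<And>n. (\<pi> n, \<pi>' n) \<in> B"
    using is_path_lift[OF _ \<pi>(1) start] cmm_bisim_fwd_step[OF B] by blast
  have "sat R V (\<pi>' l) \<Phi>1" "\<forall>j. 0 < j \<and> j < l \<longrightarrow> sat R V (\<pi>' j) \<Phi>2"
    using RhoF.IH \<pi>(3,4) \<pi>'(3) by blast+
  with \<pi>'(1,2) show ?case by auto
next
  case (RhoB \<Phi>1 \<Phi>2)
  then obtain \<pi> l where \<pi>: "is_path R \<pi>" "\<pi> l = x" "sat R V (\<pi> 0) \<Phi>1"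
    "\<forall>j. 0 < j \<and> j < l \<longrightarrow> sat R V (\<pi> j) \<Phi>2" by auto
  have start: "(\<pi> (l - 0), y) \<in> B" \<comment> \<open>the start of the reversed path\<close>
    using RhoB.prems(1) \<pi>(2) by simp
  obtain \<rho> where \<rho>: "is_path (R\<inverse>) \<rho>" "\<rho> 0 = y" "\<And>n. (\<pi> (l - n), \<rho> n) \<in> B"
    using is_path_lift[OF _ is_path_reverse[OF \<pi>(1)] start] cmm_bisim_bwd_step[OF B] by blast
  define \<pi>' where "\<pi>' j = \<rho> (l - j)" for j
  have related: "(\<pi> j, \<pi>' j) \<in> B" if "j \<le> l" for j
    using \<rho>(3)[of "l - j"] that unfolding \<pi>'_def by simp
  have "is_path R \<pi>'" using is_path_reverse[OF \<rho>(1)] unfolding \<pi>'_def by simp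
  moreover have "\<pi>' l = y" unfolding \<pi>'_def using \<rho>(2) by simp
  moreover have "sat R V (\<pi>' 0) \<Phi>1" using RhoB.IH(1) \<pi>(3) related by blast
  moreover have "\<forall>j. 0 < j \<and> j < l \<longrightarrow> sat R V (\<pi>' j) \<Phi>2"
    using RhoB.IH(2) \<pi>(4) related by (meson less_imp_le)
  ultimately show ?case by auto
qed

theorem lemma5:
  fixes R :: "('x \<times> 'x) set" and V :: "'ap \<Rightarrow> 'x set" and x1 x2 :: 'x
  assumes "(x1, x2) \<in> cmm_bisimilar R V"
  shows "slcs_equiv R V x1 x2"
proof -
  obtain B where B: "cmm_bisim R V B" "(x1, x2) \<in> B"
    using assms unfolding cmm_bisimilar_def by blast
  then show ?thesis
    unfolding slcs_equiv_def using cmm_bisim_sat cmm_bisim_sym by metis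
qed

end
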